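(* Let $(C^\bullet,\mathrm d)$ be a $\mathbb Z$-graded cochain complex of vector spaces and let $L:C^\bullet\to C^{\bullet+s}$ be a linear map of degree $s$ (for some integer $s$) which is a chain map up to sign, i.e. $\mathrm dL=\epsilon L\mathrm d$ for a fixed $\epsilon\in\{1,-1\}$. Then $\ker L$ is a subcomplex, and the following are equivalent: (i) for every $\alpha\in C^\bullet$, $\alpha\in\ker\mathrm d\cap\operatorname{im}L$ if and only if $\alpha\in\operatorname{im}(\mathrm dL)$; (ii) the map $H((\ker L)^\bullet,\mathrm d)\to H(C^\bullet,\mathrm d)$ induced by inclusion is an isomorphism in every degree. *)

theory Defs
  imports Complex_Main
begin

text \<open>Graded objects are modelled inside one ambient vector space \<open>'v\<close> over a field \<open>'k\<close>
  (scalar multiplication \<open>scale\<close>): the degree-\<open>n\<close> component \<open>C n\<close> is a linear subspace,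
  and degree-wise maps are families \<open>f n :: 'v \<Rightarrow> 'v\<close>, relevant only on \<open>C n\<close>.\<close>

definition linear_on :: "('k \<Rightarrow> 'v \<Rightarrow> 'v) \<Rightarrow> 'v set \<Rightarrow> 'v set \<Rightarrow> ('v \<Rightarrow> 'v::ab_group_add) \<Rightarrow> bool" where
  "linear_on scale V W f \<longleftrightarrow> f ` V \<subseteq> W \<and>
     (\<forall>x\<in>V. \<forall>y\<in>V. f (x + y) = f x + f y) \<and>
     (\<forall>c. \<forall>x\<in>V. f (scale c x) = scale c (f x))"

definition cochain_complex :: "('k::field \<Rightarrow> 'v \<Rightarrow> 'v) \<Rightarrow> (int \<Rightarrow> 'v set) \<Rightarrow> (int \<Rightarrow> 'v \<Rightarrow> 'v::ab_group_add) \<Rightarrow> bool" where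
  "cochain_complex scale C d \<longleftrightarrow> vector_space scale \<and>
     (\<forall>n. module.subspace scale (C n)) \<and>
     (\<forall>n. linear_on scale (C n) (C (n + 1)) (d n)) \<and>
     (\<forall>n. \<forall>x\<in>C n. d (n + 1) (d n x) = 0)"

definition subcomplex :: "('k::field \<Rightarrow> 'v \<Rightarrow> 'v) \<Rightarrow> (int \<Rightarrow> 'v set) \<Rightarrow> (int \<Rightarrow> 'v set) \<Rightarrow> (int \<Rightarrow> 'v \<Rightarrow> 'v::ab_group_add) \<Rightarrow> bool" where
  "subcomplex scale K C d \<longleftrightarrow>
     (\<forall>n. module.subspace scale (K n) \<and> K n \<subseteq> C n) \<and>
     (\<forall>n. \<forall>x\<in>K n. d n x \<in> K (n + 1))"

definition cocycles :: "(int \<Rightarrow> 'v set) \<Rightarrow> (int \<Rightarrow> 'v \<Rightarrow> 'v::zero) \<Rightarrow> int \<Rightarrow> 'v set" where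
  "cocycles C d n = {x \<in> C n. d n x = 0}"

definition coboundaries :: "(int \<Rightarrow> 'v set) \<Rightarrow> (int \<Rightarrow> 'v \<Rightarrow> 'v) \<Rightarrow> int \<Rightarrow> 'v set" where
  "coboundaries C d n = d (n - 1) ` C (n - 1)"

definition coset :: "'v set \<Rightarrow> 'v::plus \<Rightarrow> 'v set" where
  "coset B z = (\<lambda>b. z + b) ` B"

definition cohomology :: "(int \<Rightarrow> 'v set) \<Rightarrow> (int \<Rightarrow> 'v \<Rightarrow> 'v::ab_group_add) \<Rightarrow> int \<Rightarrow> 'v set set" where
  "cohomology C d n = coset (coboundaries C d n) ` cocycles C d n"

text \<open>Map on cohomology induced by the inclusion of a subcomplex \<open>K\<close> into \<open>C\<close>:
  the class \<open>[z]_K\<close> is sent to \<open>[z]_C\<close> (independent of the representative).\<close>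
definition incl_cohom_map :: "(int \<Rightarrow> 'v set) \<Rightarrow> (int \<Rightarrow> 'v \<Rightarrow> 'v::ab_group_add) \<Rightarrow> int \<Rightarrow> 'v set \<Rightarrow> 'v set" where
  "incl_cohom_map C d n X = coset (coboundaries C d n) (SOME z. z \<in> X)"

end

theory Submission
  imports Defs
begin

text \<open>Because \<open>d L = \<epsilon> L d\<close> with \<open>\<epsilon>\<^sup>2 = 1\<close>, the image of \<open>d L\<close> is \<open>L (im d)\<close>, and
  condition (i) says exactly that \<open>ker (d L) = ker L + im d\<close>. For any subcomplex \<open>K\<close>, the
  map \<open>H(K) \<rightarrow> H(C)\<close> is injective iff K-cocycles that are C-coboundaries are K-coboundaries,
  and surjective iff every C-cocycle is cohomologous to a K-cocycle. For \<open>K = ker L\<close> both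
  properties reduce to correcting an element of \<open>ker (d L)\<close> by a coboundary into \<open>ker L\<close>:
  injectivity in degree \<open>n + 1\<close> and surjectivity in degree \<open>n\<close> together give the splitting
  in degree \<open>n\<close>, and conversely.\<close>

context module
begin

lemma linear_on_diff:
  assumes "subspace V" "linear_on scale V W f" "x \<in> V" "y \<in> V"
  shows "f (x - y) = f x - f y"
proof -
  have "f ((x - y) + y) = f (x - y) + f y"
    using assms subspace_diff unfolding linear_on_def by blast
  then show ?thesis by (simp add: algebra_simps)
qed

lemma linear_on_zero:
  assumes "subspace V" "linear_on scale V W f"
  shows "f 0 = 0"
  using linear_on_diff[OF assms subspace_0 subspace_0] assms(1) by simp

lemma subspace_image_linear_on:
  assumes V: "subspace V" and f: "linear_on scale V W f"
  shows "subspace (f ` V)"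
proof (rule subspaceI)
  show "0 \<in> f ` V"
    using linear_on_zero[OF V f] subspace_0[OF V] by (metis image_eqI)
next
  fix x y assume "x \<in> f ` V" "y \<in> f ` V"
  then obtain a b where "a \<in> V" "b \<in> V" "x = f a" "y = f b" by blast
  then show "x + y \<in> f ` V"
    using f V subspace_add unfolding linear_on_def by (metis image_eqI)
next
  fix c x assume "x \<in> f ` V"
  then obtain a where "a \<in> V" "x = f a" by blast
  then show "c *s x \<in> f ` V"
    using f V subspace_scale unfolding linear_on_def by (metis image_eqI)
qed

lemma subspace_kernel_linear_on:
  assumes V: "subspace V" and f: "linear_on scale V W f"
  shows "subspace {x \<in> V. f x = 0}"
  using V f linear_on_zero[OF V f] subspace_0[OF V] subspace_add[OF V] subspace_scale[OF V]
  by (intro subspaceI) (auto simp: linear_on_def)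

lemma coset_eq_iff:
  assumes "subspace B"
  shows "coset B a = coset B b \<longleftrightarrow> a - b \<in> B"
proof
  assume "coset B a = coset B b"
  moreover have "a \<in> coset B a"
    unfolding coset_def using subspace_0[OF assms] by (metis add.right_neutral image_eqI)
  ultimately obtain c where "c \<in> B" "a = b + c" unfolding coset_def by auto
  then show "a - b \<in> B" by simp
next
  assume ab: "a - b \<in> B"
  have shift: "coset B x \<subseteq> coset B y" if "x - y \<in> B" for x y
  proof
    fix w assume "w \<in> coset B x"
    then obtain c where "c \<in> B" "w = x + c" unfolding coset_def by auto
    moreover from this have "(x - y) + c \<in> B" using subspace_add[OF assms] that by blast
    ultimately show "w \<in> coset B y" unfolding coset_def by (force simp: algebra_simps)
  qed
  have "b - a \<in> B" using subspace_neg[OF assms ab] by simp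
  then show "coset B a = coset B b" using shift ab by blast
qed

end

locale cochain_cx = vector_space scale for scale :: "'k::field \<Rightarrow> 'v::ab_group_add \<Rightarrow> 'v" +
  fixes C :: "int \<Rightarrow> 'v set" and d :: "int \<Rightarrow> 'v \<Rightarrow> 'v"
  assumes subspace_C: "\<And>n. subspace (C n)"
    and linear_d: "\<And>n. linear_on scale (C n) (C (n + 1)) (d n)"
    and d_d: "\<And>n x. x \<in> C n \<Longrightarrow> d (n + 1) (d n x) = 0"

lemma cochain_complex_iff_cochain_cx: "cochain_complex scale C d \<longleftrightarrow> cochain_cx scale C d"
  unfolding cochain_complex_def cochain_cx_def cochain_cx_axioms_def by blast

context cochain_cx
begin

lemma d_mem: "x \<in> C n \<Longrightarrow> d n x \<in> C (n + 1)"
  using linear_d unfolding linear_on_def by blast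

lemma d_diff: "x \<in> C n \<Longrightarrow> y \<in> C n \<Longrightarrow> d n (x - y) = d n x - d n y"
  using linear_on_diff[OF subspace_C linear_d] .

lemma d_scale: "x \<in> C n \<Longrightarrow> d n (scale c x) = scale c (d n x)"
  using linear_d unfolding linear_on_def by blast

lemma d_zero: "d n 0 = 0"
  using linear_on_zero[OF subspace_C linear_d] .

lemma subspace_cocycles: "subspace (cocycles C d n)"
  unfolding cocycles_def using subspace_kernel_linear_on[OF subspace_C linear_d] .

lemma subspace_coboundaries: "subspace (coboundaries C d n)"
  unfolding coboundaries_def using subspace_image_linear_on[OF subspace_C linear_d] .

lemma coboundaries_subset_cocycles: "coboundaries C d n \<subseteq> cocycles C d n"
  unfolding coboundaries_def cocycles_def using d_mem d_d by fastforce

lemma coboundaries_subset: "coboundaries C d n \<subseteq> C n"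
  using coboundaries_subset_cocycles unfolding cocycles_def by blast

end

lemma cochain_cx_subcomplex:
  assumes C: "cochain_cx scale C d" and K: "subcomplex scale K C d"
  shows "cochain_cx scale K d"
proof -
  interpret cochain_cx scale C d by (rule C)
  have KC: "K n \<subseteq> C n" and subspace_K: "subspace (K n)" and dK: "x \<in> K n \<Longrightarrow> d n x \<in> K (n + 1)"
    for n x using K unfolding subcomplex_def by auto
  have "linear_on scale (K n) (K (n + 1)) (d n)" for n
    using linear_d[of n] KC[of n] dK unfolding linear_on_def by blast
  then show ?thesis
    using subspace_K KC d_d by unfold_locales blast+
qed

locale cochain_subcx = cochain_cx +
  fixes K
  assumes subcomplex: "subcomplex scale K C d"
begin

sublocale K: cochain_cx scale K d
  using cochain_cx_subcomplex[OF cochain_cx_axioms subcomplex] .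

lemma K_subset: "K n \<subseteq> C n"
  using subcomplex unfolding subcomplex_def by blast

lemma cocycles_K_subset: "cocycles K d n \<subseteq> cocycles C d n"
  unfolding cocycles_def using K_subset by blast

lemma coboundaries_K_subset: "coboundaries K d n \<subseteq> coboundaries C d n"
  unfolding coboundaries_def using K_subset by blast

lemma incl_cohom_map_coset:
  assumes "z \<in> cocycles K d n"
  shows "incl_cohom_map C d n (coset (coboundaries K d n) z) = coset (coboundaries C d n) z"
proof -
  have "z \<in> coset (coboundaries K d n) z"
    unfolding coset_def using subspace_0[OF K.subspace_coboundaries]
    by (metis add.right_neutral image_eqI)
  then have "(SOME w. w \<in> coset (coboundaries K d n) z) \<in> coset (coboundaries K d n) z"
    by (rule someI)
  then have "(SOME w. w \<in> coset (coboundaries K d n) z) - z \<in> coboundaries C d n"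
    unfolding coset_def using coboundaries_K_subset[of n] by auto
  then show ?thesis
    unfolding incl_cohom_map_def using coset_eq_iff[OF subspace_coboundaries] by blast
qed

lemma inj_on_incl_cohom_map_iff:
  "inj_on (incl_cohom_map C d n) (cohomology K d n) \<longleftrightarrow>
   cocycles K d n \<inter> coboundaries C d n \<subseteq> coboundaries K d n"
proof
  assume inj: "inj_on (incl_cohom_map C d n) (cohomology K d n)"
  show "cocycles K d n \<inter> coboundaries C d n \<subseteq> coboundaries K d n"
  proof
    fix z assume z: "z \<in> cocycles K d n \<inter> coboundaries C d n"
    have zero: "0 \<in> cocycles K d n" using subspace_0[OF K.subspace_cocycles] .
    have "incl_cohom_map C d n (coset (coboundaries K d n) z) =
          incl_cohom_map C d n (coset (coboundaries K d n) 0)"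
      using z zero incl_cohom_map_coset coset_eq_iff[OF subspace_coboundaries] by simp
    then have "coset (coboundaries K d n) z = coset (coboundaries K d n) 0"
      by (rule inj_onD[OF inj]) (use z zero in \<open>auto simp: cohomology_def\<close>)
    then show "z \<in> coboundaries K d n"
      using coset_eq_iff[OF K.subspace_coboundaries] by simp
  qed
next
  assume ZB: "cocycles K d n \<inter> coboundaries C d n \<subseteq> coboundaries K d n"
  show "inj_on (incl_cohom_map C d n) (cohomology K d n)"
  proof (rule inj_onI)
    fix X Y assume "X \<in> cohomology K d n" "Y \<in> cohomology K d n"
      and eq: "incl_cohom_map C d n X = incl_cohom_map C d n Y"
    then obtain x y where x: "x \<in> cocycles K d n" "X = coset (coboundaries K d n) x"
      and y: "y \<in> cocycles K d n" "Y = coset (coboundaries K d n) y"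
      unfolding cohomology_def by blast
    have "x - y \<in> coboundaries C d n"
      using eq x y incl_cohom_map_coset coset_eq_iff[OF subspace_coboundaries] by simp
    moreover have "x - y \<in> cocycles K d n"
      using subspace_diff[OF K.subspace_cocycles x(1) y(1)] .
    ultimately show "X = Y"
      using ZB x y coset_eq_iff[OF K.subspace_coboundaries] by blast
  qed
qed

lemma incl_cohom_map_image_iff:
  "incl_cohom_map C d n ` cohomology K d n = cohomology C d n \<longleftrightarrow>
   (\<forall>z\<in>cocycles C d n. \<exists>z'\<in>cocycles K d n. z - z' \<in> coboundaries C d n)"
proof -
  have image: "incl_cohom_map C d n ` cohomology K d n = coset (coboundaries C d n) ` cocycles K d n"
    unfolding cohomology_def image_image using incl_cohom_map_coset by (auto simp: image_def)
  have "coset (coboundaries C d n) ` cocycles K d n = coset (coboundaries C d n) ` cocycles C d n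
        \<longleftrightarrow> (\<forall>z\<in>cocycles C d n. \<exists>z'\<in>cocycles K d n. z - z' \<in> coboundaries C d n)"
  proof
    assume eq: "coset (coboundaries C d n) ` cocycles K d n = coset (coboundaries C d n) ` cocycles C d n"
    show "\<forall>z\<in>cocycles C d n. \<exists>z'\<in>cocycles K d n. z - z' \<in> coboundaries C d n"
    proof
      fix z assume "z \<in> cocycles C d n"
      then obtain z' where "z' \<in> cocycles K d n" "coset (coboundaries C d n) z = coset (coboundaries C d n) z'"
        using eq by (metis imageE imageI)
      then show "\<exists>z'\<in>cocycles K d n. z - z' \<in> coboundaries C d n"
        using coset_eq_iff[OF subspace_coboundaries] by blast
    qed
  next
    assume lift: "\<forall>z\<in>cocycles C d n. \<exists>z'\<in>cocycles K d n. z - z' \<in> coboundaries C d n"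
    have "coset (coboundaries C d n) z \<in> coset (coboundaries C d n) ` cocycles K d n"
      if "z \<in> cocycles C d n" for z
      using lift that coset_eq_iff[OF subspace_coboundaries] by (metis imageI)
    then show "coset (coboundaries C d n) ` cocycles K d n = coset (coboundaries C d n) ` cocycles C d n"
      using cocycles_K_subset by blast
  qed
  then show ?thesis
    unfolding image by (simp only: cohomology_def)
qed

lemma bij_incl_cohom_map_iff:
  "bij_betw (incl_cohom_map C d n) (cohomology K d n) (cohomology C d n) \<longleftrightarrow>
   cocycles K d n \<inter> coboundaries C d n \<subseteq> coboundaries K d n \<and>
   (\<forall>z\<in>cocycles C d n. \<exists>z'\<in>cocycles K d n. z - z' \<in> coboundaries C d n)"
  unfolding bij_betw_def inj_on_incl_cohom_map_iff incl_cohom_map_image_iff ..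

end

locale twisted_chain_map = cochain_cx +
  fixes L s \<epsilon>
  assumes linear_L: "\<And>n. linear_on scale (C n) (C (n + s)) (L n)"
    and eps: "\<epsilon> = 1 \<or> \<epsilon> = -1"
    and d_L: "\<And>n x. x \<in> C n \<Longrightarrow> d (n + s) (L n x) = scale \<epsilon> (L (n + 1) (d n x))"
begin

definition ker_L where "ker_L n = {x \<in> C n. L n x = 0}"

lemma L_mem: "x \<in> C n \<Longrightarrow> L n x \<in> C (n + s)"
  using linear_L unfolding linear_on_def by blast

lemma L_diff: "x \<in> C n \<Longrightarrow> y \<in> C n \<Longrightarrow> L n (x - y) = L n x - L n y"
  using linear_on_diff[OF subspace_C linear_L] .

lemma L_scale: "x \<in> C n \<Longrightarrow> L n (scale c x) = scale c (L n x)"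
  using linear_L unfolding linear_on_def by blast

lemma L_zero: "L n 0 = 0"
  using linear_on_zero[OF subspace_C linear_L] .

lemma eps_square: "\<epsilon> * \<epsilon> = 1"
  using eps by auto

lemma subspace_ker_L: "subspace (ker_L n)"
  unfolding ker_L_def using subspace_kernel_linear_on[OF subspace_C linear_L] .

lemma subcomplex_ker_L: "subcomplex scale ker_L C d"
  unfolding subcomplex_def
proof (intro conjI allI ballI subspace_ker_L)
  fix n show "ker_L n \<subseteq> C n" unfolding ker_L_def by blast
next
  fix n x assume "x \<in> ker_L n"
  then have x: "x \<in> C n" "L n x = 0" unfolding ker_L_def by auto
  then have "scale \<epsilon> (L (n + 1) (d n x)) = 0" using d_L[OF x(1)] d_zero by simp
  then have "L (n + 1) (d n x) = 0" using eps by auto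
  then show "d n x \<in> ker_L (n + 1)" unfolding ker_L_def using d_mem[OF x(1)] by blast
qed

sublocale cochain_subcx scale C d ker_L
  by unfold_locales (rule subcomplex_ker_L)

lemma L_d_eq_d_L: "x \<in> C n \<Longrightarrow> L (n + 1) (d n x) = d (n + s) (L n (scale \<epsilon> x))"
  using d_L[of "scale \<epsilon> x" n] d_scale L_scale d_mem subspace_scale[OF subspace_C]
  by (simp add: eps_square)

lemma L_image_coboundaries:
  "L n ` coboundaries C d n = (\<lambda>y. d (n - 1 + s) (L (n - 1) y)) ` C (n - 1)"
proof -
  have Ld: "L n (d (n - 1) x) = d (n - 1 + s) (L (n - 1) (scale \<epsilon> x))" if "x \<in> C (n - 1)" for x
    using L_d_eq_d_L[OF that] by simp
  have eps_C: "scale \<epsilon> x \<in> C (n - 1)" if "x \<in> C (n - 1)" for x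
    using subspace_scale[OF subspace_C that] .
  show ?thesis
  proof
    show "L n ` coboundaries C d n \<subseteq> (\<lambda>y. d (n - 1 + s) (L (n - 1) y)) ` C (n - 1)"
      unfolding coboundaries_def using Ld eps_C by auto
  next
    have "d (n - 1 + s) (L (n - 1) y) = L n (d (n - 1) (scale \<epsilon> y))" if "y \<in> C (n - 1)" for y
      using Ld[OF eps_C[OF that]] by (simp add: eps_square)
    then show "(\<lambda>y. d (n - 1 + s) (L (n - 1) y)) ` C (n - 1) \<subseteq> L n ` coboundaries C d n"
      unfolding coboundaries_def using eps_C by auto
  qed
qed

lemma L_image_coboundaries_subset: "L n ` coboundaries C d n \<subseteq> cocycles C d (n + s) \<inter> L n ` C n"
proof -
  have "d (n - 1 + s) (L (n - 1) y) \<in> coboundaries C d (n + s)" if "y \<in> C (n - 1)" for y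
    unfolding coboundaries_def using L_mem[OF that] by (simp add: algebra_simps)
  then have "L n ` coboundaries C d n \<subseteq> cocycles C d (n + s)"
    unfolding L_image_coboundaries using coboundaries_subset_cocycles by blast
  then show ?thesis
    using coboundaries_subset by blast
qed

lemma L_image_coboundaries_iff:
  assumes c: "c \<in> C n"
  shows "L n c \<in> L n ` coboundaries C d n \<longleftrightarrow> (\<exists>b\<in>coboundaries C d n. c - b \<in> ker_L n)"
proof -
  have "L n c = L n b \<longleftrightarrow> c - b \<in> ker_L n" if "b \<in> coboundaries C d n" for b
  proof -
    have "b \<in> C n" using that coboundaries_subset by blast
    then show ?thesis
      using L_diff[OF c] subspace_diff[OF subspace_C c] unfolding ker_L_def by auto
  qed
  then show ?thesis by blast
qed

text \<open>The splitting \<open>ker (d L) = ker L + im d\<close>; the inclusion \<open>\<supseteq>\<close> always holds.\<close>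
definition ker_dL_split :: bool where
  "ker_dL_split \<longleftrightarrow>
     (\<forall>n. \<forall>c\<in>C n. d (n + s) (L n c) = 0 \<longrightarrow> (\<exists>b\<in>coboundaries C d n. c - b \<in> ker_L n))"

lemma image_condition_iff_ker_dL_split:
  "(\<forall>n. \<forall>\<alpha>\<in>C n.
      (\<alpha> \<in> cocycles C d n \<and> \<alpha> \<in> L (n - s) ` C (n - s))
        \<longleftrightarrow> \<alpha> \<in> (\<lambda>y. d (n - 1) (L (n - 1 - s) y)) ` C (n - 1 - s))
   \<longleftrightarrow> ker_dL_split"
proof -
  have shift: "(\<forall>n. P n) \<longleftrightarrow> (\<forall>n. P (n + s))" for P :: "int \<Rightarrow> bool"
    by (metis diff_add_cancel)
  have deg: "n + s - 1 = n - 1 + s" "n + s - 1 - s = n - 1" for n by simp_all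
  have "(\<forall>\<alpha>\<in>C (n + s). (\<alpha> \<in> cocycles C d (n + s) \<and> \<alpha> \<in> L n ` C n)
           \<longleftrightarrow> \<alpha> \<in> L n ` coboundaries C d n)
        \<longleftrightarrow> (\<forall>c\<in>C n. d (n + s) (L n c) = 0 \<longrightarrow> (\<exists>b\<in>coboundaries C d n. c - b \<in> ker_L n))"
    (is "?image_cond \<longleftrightarrow> ?split") for n
  proof
    assume ?image_cond
    then show ?split
      using L_mem L_image_coboundaries_iff unfolding cocycles_def by blast
  next
    assume split: ?split
    have "\<alpha> \<in> L n ` coboundaries C d n"
      if "\<alpha> \<in> cocycles C d (n + s)" "c \<in> C n" "\<alpha> = L n c" for \<alpha> c
      using that split L_image_coboundaries_iff unfolding cocycles_def by blast
    then show ?image_cond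
      using L_image_coboundaries_subset[of n] by blast
  qed
  then show ?thesis
    unfolding ker_dL_split_def by (subst shift) (simp add: deg L_image_coboundaries)
qed

lemma bij_incl_cohom_map_if_ker_dL_split:
  assumes split: ker_dL_split
  shows "bij_betw (incl_cohom_map C d n) (cohomology ker_L d n) (cohomology C d n)"
  unfolding bij_incl_cohom_map_iff
proof (intro conjI subsetI ballI)
  fix z assume z: "z \<in> cocycles ker_L d n \<inter> coboundaries C d n"
  then obtain c where c: "c \<in> C (n - 1)" "z = d (n - 1) c"
    unfolding coboundaries_def by blast
  have "L n z = 0" using z unfolding cocycles_def ker_L_def by blast
  then have "d (n - 1 + s) (L (n - 1) c) = 0"
    using d_L[OF c(1)] c(2) by simp
  then obtain b where b: "b \<in> coboundaries C d (n - 1)" "c - b \<in> ker_L (n - 1)"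
    using split c(1) unfolding ker_dL_split_def by blast
  have "d (n - 1) b = 0"
    using b(1) coboundaries_subset_cocycles unfolding cocycles_def by blast
  then have "d (n - 1) (c - b) = z"
    using d_diff[OF c(1)] b(1) coboundaries_subset[of "n - 1"] c(2) by auto
  then show "z \<in> coboundaries ker_L d n"
    unfolding coboundaries_def using b(2) by blast
next
  fix z assume z: "z \<in> cocycles C d n"
  then have "d (n + s) (L n z) = 0"
    using d_L L_zero unfolding cocycles_def by simp
  then obtain b where b: "b \<in> coboundaries C d n" "z - b \<in> ker_L n"
    using split z unfolding ker_dL_split_def cocycles_def by blast
  have "z - b \<in> cocycles C d n"
    using subspace_diff[OF subspace_cocycles z] b(1) coboundaries_subset_cocycles by blast
  then have "z - b \<in> cocycles ker_L d n"
    using b(2) unfolding cocycles_def by blast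
  then show "\<exists>z'\<in>cocycles ker_L d n. z - z' \<in> coboundaries C d n"
    using b(1) by force
qed

lemma ker_dL_split_if_bij_incl_cohom_map:
  assumes bij: "\<And>n. bij_betw (incl_cohom_map C d n) (cohomology ker_L d n) (cohomology C d n)"
  shows ker_dL_split
  unfolding ker_dL_split_def
proof (intro allI ballI impI)
  fix n c assume c: "c \<in> C n" and dLc: "d (n + s) (L n c) = 0"
  have inj: "cocycles ker_L d (n + 1) \<inter> coboundaries C d (n + 1) \<subseteq> coboundaries ker_L d (n + 1)"
    and surj: "\<forall>z\<in>cocycles C d n. \<exists>z'\<in>cocycles ker_L d n. z - z' \<in> coboundaries C d n"
    using bij bij_incl_cohom_map_iff by blast+
  have "L (n + 1) (d n c) = 0"
    using dLc d_L[OF c] eps by auto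
  then have "d n c \<in> cocycles ker_L d (n + 1)"
    unfolding cocycles_def ker_L_def using d_mem[OF c] d_d[OF c] by blast
  moreover have "d n c \<in> coboundaries C d (n + 1)"
    unfolding coboundaries_def using c by simp
  ultimately obtain \<gamma> where \<gamma>: "\<gamma> \<in> ker_L n" "d n c = d n \<gamma>"
    using inj unfolding coboundaries_def by auto
  have \<gamma>_C: "\<gamma> \<in> C n" using \<gamma>(1) unfolding ker_L_def by blast
  have "c - \<gamma> \<in> cocycles C d n"
    using d_diff[OF c \<gamma>_C] \<gamma>(2) subspace_diff[OF subspace_C c \<gamma>_C] unfolding cocycles_def by simp
  then obtain z' where z': "z' \<in> cocycles ker_L d n" "c - \<gamma> - z' \<in> coboundaries C d n"
    using surj by blast
  have "\<gamma> + z' \<in> ker_L n"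
    using subspace_add[OF subspace_ker_L \<gamma>(1)] z'(1) unfolding cocycles_def by blast
  then show "\<exists>b\<in>coboundaries C d n. c - b \<in> ker_L n"
    using z'(2) by (intro bexI[of _ "c - \<gamma> - z'"]) (simp_all add: algebra_simps)
qed

lemma bij_incl_cohom_map_iff_ker_dL_split:
  "(\<forall>n. bij_betw (incl_cohom_map C d n) (cohomology ker_L d n) (cohomology C d n)) \<longleftrightarrow> ker_dL_split"
  using bij_incl_cohom_map_if_ker_dL_split ker_dL_split_if_bij_incl_cohom_map by blast

end

theorem theorem3p25:
  fixes scale :: "'k::field \<Rightarrow> 'v::ab_group_add \<Rightarrow> 'v"
    and C :: "int \<Rightarrow> 'v set" and d :: "int \<Rightarrow> 'v \<Rightarrow> 'v"
    and L :: "int \<Rightarrow> 'v \<Rightarrow> 'v" and s :: int and \<epsilon> :: 'k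
  assumes cx: "cochain_complex scale C d"
    and L_lin: "\<And>n. linear_on scale (C n) (C (n + s)) (L n)"
    and eps: "\<epsilon> = 1 \<or> \<epsilon> = -1"
    and dL: "\<And>n x. x \<in> C n \<Longrightarrow> d (n + s) (L n x) = scale \<epsilon> (L (n + 1) (d n x))"
  defines "K \<equiv> (\<lambda>n. {x \<in> C n. L n x = 0})"
  shows "subcomplex scale K C d \<and>
    ((\<forall>n. \<forall>\<alpha>\<in>C n.
        (\<alpha> \<in> cocycles C d n \<and> \<alpha> \<in> L (n - s) ` C (n - s))
          \<longleftrightarrow> \<alpha> \<in> (\<lambda>y. d (n - 1) (L (n - 1 - s) y)) ` C (n - 1 - s))
     \<longleftrightarrow> (\<forall>n. bij_betw (incl_cohom_map C d n) (cohomology K d n) (cohomology C d n)))"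
proof -
  interpret twisted_chain_map scale C d L s \<epsilon>
    using cx L_lin eps dL
    unfolding cochain_complex_iff_cochain_cx twisted_chain_map_def twisted_chain_map_axioms_def
    by blast
  have "K = ker_L"
    unfolding K_def ker_L_def ..
  then show ?thesis
    using subcomplex_ker_L image_condition_iff_ker_dL_split bij_incl_cohom_map_iff_ker_dL_split
    by simp
qed

end
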